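(* Let $S_n$ be as defined in the context. For every $n\in\mathbb{N}$, $n\ge 1$, and every $w\in\{0,1\}^n$, $\mathrm{occ}_b(w,S_n)=1$; that is, $S_n$, split into consecutive blocks of length $n$, contains every binary string of length $n$ exactly once.
   Context: Strings are indexed from $0$; $x[i..j]$ is the substring from position $i$ to $j$; $x^j$ is $j$-fold concatenation. For a string $x$ and $w$ nonempty, $\mathrm{occ}_b(w,x)=|\{i: x[i..i+|w|-1]=w,\ i\equiv 0 \bmod |w|\}|$. de Bruijn strings: for $n\ge1$, a de Bruijn string of order $n$ is a binary string $x$ of length $2^n$ such that every $w\in\{0,1\}^n$ occurs exactly once as a substring of $x\cdot x[0..n-2]$. $db(n)$ is the lexicographically least one, produced by Martin's algorithm: start with $x=1^{n-1}$; while possible, append a bit (preferring $0$ over $1$) so that all length-$n$ substrings of $x$ remain distinct; then delete the prefix $1^{n-1}$. For $0\le i<2^n$, $db_i(n)=db(n)[i..2^n-1]\cdot db(n)[0..i-1]$. For $n\ge1$ write $n=2^st$ with $s\ge0$ and $t$ odd, let $B_{n,i}=db_i(n)^t$ for $0\le i<2^s$, and $S_n=B_{n,0}B_{n,1}\cdots B_{n,2^s-1}$. *)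

theory Defs
  imports "HOL-Library.While_Combinator" "HOL-Computational_Algebra.Primes"
begin

text \<open>Binary strings are lists of booleans: False encodes 0, True encodes 1.
  Strings are indexed from 0.\<close>

definition occ_b :: "bool list \<Rightarrow> bool list \<Rightarrow> nat" where
  "occ_b w x = card {i. i + length w \<le> length x \<and> take (length w) (drop i x) = w
                         \<and> i mod length w = 0}"

definition substrs :: "nat \<Rightarrow> bool list \<Rightarrow> bool list list" where
  "substrs n x = map (\<lambda>i. take n (drop i x)) [0..<Suc (length x) - n]"

definition ok :: "nat \<Rightarrow> bool list \<Rightarrow> bool" where
  "ok n x \<longleftrightarrow> distinct (substrs n x)"

definition martin :: "nat \<Rightarrow> bool list" where
  "martin n = the (while_option
      (\<lambda>x. ok n (x @ [False]) \<or> ok n (x @ [True]))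
      (\<lambda>x. if ok n (x @ [False]) then x @ [False] else x @ [True])
      (replicate (n - 1) True))"

definition db :: "nat \<Rightarrow> bool list" where
  "db n = drop (n - 1) (martin n)"

definition db_rot :: "nat \<Rightarrow> nat \<Rightarrow> bool list" where
  "db_rot n i = drop i (db n) @ take i (db n)"

definition S :: "nat \<Rightarrow> bool list" where
  "S n = (let s = multiplicity (2::nat) n; t = n div 2 ^ s in
          concat (map (\<lambda>i. concat (replicate t (db_rot n i))) [0..<2 ^ s]))"

end

theory Submission
  imports Defs "HOL-Number_Theory.Cong"
begin

text \<open>Martin's greedy algorithm stops with a string x in which every binary word of length n
  occurs exactly once as a window, and x begins and ends with 1^(n-1). The classical argument:
  a word of length n-1 occurring at three positions other than the start would have three
  distinct one-bit predecessors; and the greedy preference for 0 propagates the completeness of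
  the final word 1^(n-1) to every word. As x is db(n) preceded by its own last n-1 letters, every
  word occurs exactly once among the 2^n cyclic windows of db(n).

  Write n = 2^s t with t odd and 2^n = 2^s M. The j-th block of length n of S_n is the cyclic
  window of db(n) starting at j div M + j n (mod 2^n). This start position determines j div M as
  its residue modulo 2^s and then j t modulo M; since t is coprime to M, the map is a permutation
  of the residues modulo 2^n. So the blocks of S_n are the cyclic windows of db(n), each once.\<close>

section \<open>Martin's algorithm yields a de Bruijn string\<close>

lemma set_substrs: "set (substrs n x) = {take n (drop p x) | p. p + n \<le> length x}"
  unfolding substrs_def by force

lemma length_substrs: "length (substrs n x) = Suc (length x) - n"
  by (simp add: substrs_def)

lemma substrs_snoc:
  assumes "1 \<le> n" "n - 1 \<le> length x"
  shows "substrs n (x @ [b]) = substrs n x @ [drop (length x - (n - 1)) x @ [b]]"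
proof -
  have "[0..<Suc (length (x @ [b])) - n] = [0..<Suc (length x) - n] @ [Suc (length x) - n]"
    using assms by (simp add: Suc_diff_le)
  moreover have "take n (drop (Suc (length x) - n) (x @ [b])) = drop (length x - (n - 1)) x @ [b]"
    using assms by (simp add: Suc_diff_le)
  ultimately show ?thesis
    unfolding substrs_def by simp
qed

lemma ok_window_inj:
  assumes "ok n x" "p + n \<le> length x" "q + n \<le> length x"
    and "take n (drop p x) = take n (drop q x)"
  shows "p = q"
proof -
  have "substrs n x ! p = substrs n x ! q"
  proof -
    have "p < Suc (length x) - n" "q < Suc (length x) - n"
      using assms(2,3) by linarith+
    then show ?thesis
      using assms(4) by (simp add: substrs_def)
  qed
  moreover have "p < length (substrs n x)" "q < length (substrs n x)"
    using assms(2,3) by (simp_all add: length_substrs)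
  ultimately show ?thesis
    using assms(1) by (simp add: ok_def nth_eq_iff_index_eq)
qed

lemma card_bool_lists: "card {w :: bool list. length w = n} = 2 ^ n"
  using card_lists_length_eq[of "UNIV :: bool set" n] by simp

lemma finite_bool_lists: "finite {w :: bool list. length w = n}"
  using finite_lists_length_eq[of "UNIV :: bool set" n] by simp

lemma substrs_subset: "set (substrs n x) \<subseteq> {w. length w = n}"
  unfolding substrs_def by auto

lemma ok_length_bound:
  assumes "ok n x"
  shows "Suc (length x) - n \<le> 2 ^ n"
proof -
  have "Suc (length x) - n = card (set (substrs n x))"
    using assms by (simp add: ok_def distinct_card length_substrs)
  also have "\<dots> \<le> 2 ^ n"
    using card_mono[OF finite_bool_lists substrs_subset] by (simp add: card_bool_lists)
  finally show ?thesis .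
qed

text \<open>The last conjunct records the greedy preference for 0: a 1 is appended only when the
  0-extension of the current suffix already occurs.\<close>
definition martin_inv :: "nat \<Rightarrow> bool list \<Rightarrow> bool" where
  "martin_inv n x \<longleftrightarrow> take (n - 1) x = replicate (n - 1) True \<and> ok n x \<and>
     (\<forall>y. y @ [True] \<in> set (substrs n x) \<longrightarrow> y @ [False] \<in> set (substrs n x))"

lemma martin_inv_init: "1 \<le> n \<Longrightarrow> martin_inv n (replicate (n - 1) True)"
  by (simp add: martin_inv_def ok_def substrs_def)

lemma martin_inv_length: "martin_inv n x \<Longrightarrow> n - 1 \<le> length x"
  unfolding martin_inv_def by (metis length_replicate length_take min.bounded_iff order_refl)

lemma martin_inv_step:
  assumes "1 \<le> n" "martin_inv n x" "ok n (x @ [False]) \<or> ok n (x @ [True])"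
  shows "martin_inv n (if ok n (x @ [False]) then x @ [False] else x @ [True])"
proof (cases "ok n (x @ [False])")
  case True
  then show ?thesis
    using assms martin_inv_length[OF assms(2)] by (auto simp: martin_inv_def substrs_snoc)
next
  case False
  with assms martin_inv_length[OF assms(2)]
  have "drop (length x - (n - 1)) x @ [False] \<in> set (substrs n x)"
    by (simp add: martin_inv_def ok_def substrs_snoc)
  then show ?thesis
    using False assms martin_inv_length[OF assms(2)] by (auto simp: martin_inv_def substrs_snoc)
qed

lemma martin_stuck:
  assumes "1 \<le> n"
  shows "martin_inv n (martin n)" "\<not> ok n (martin n @ [b])"
proof -
  let ?b = "\<lambda>x. ok n (x @ [False]) \<or> ok n (x @ [True])"
  let ?c = "\<lambda>x. if ok n (x @ [False]) then x @ [False] else x @ [True]"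
  have "\<exists>x. while_option ?b ?c (replicate (n - 1) True) = Some x"
  proof (rule measure_while_option_Some[where P = "martin_inv n" and f = "\<lambda>x. 2 ^ n + n - length x"])
    fix x assume "martin_inv n x" "?b x"
    moreover have "ok n (?c x)"
      using \<open>?b x\<close> by auto
    ultimately show "martin_inv n (?c x) \<and> 2 ^ n + n - length (?c x) < 2 ^ n + n - length x"
      using martin_inv_step[OF assms] ok_length_bound[of n "?c x"] by (auto split: if_splits)
  qed (rule martin_inv_init[OF assms])
  then obtain x where x: "while_option ?b ?c (replicate (n - 1) True) = Some x"
    by blast
  then have "martin n = x"
    by (simp add: martin_def)
  moreover have "martin_inv n x"
    by (rule while_option_rule[OF _ x]) (use martin_inv_step[OF assms] martin_inv_init[OF assms] in auto)
  moreover have "\<not> ?b x"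
    using while_option_stop[OF x] .
  ultimately show "martin_inv n (martin n)" "\<not> ok n (martin n @ [b])"
    by (simp, cases b) simp_all
qed

locale martin_terminal =
  fixes n :: nat and x :: "bool list"
  assumes n_pos: "1 \<le> n"
    and inv: "martin_inv n x"
    and stuck: "\<And>b. \<not> ok n (x @ [b])"
begin

abbreviation windows :: "bool list set" where
  "windows \<equiv> set (substrs n x)"

abbreviation final_word :: "bool list" where
  "final_word \<equiv> drop (length x - (n - 1)) x"

lemma length_ge: "n - 1 \<le> length x"
  using martin_inv_length[OF inv] .

lemma prefix_ones: "take (n - 1) x = replicate (n - 1) True"
  using inv by (simp add: martin_inv_def)

lemma ok_x: "ok n x"
  using inv by (simp add: martin_inv_def)

lemma length_final_word: "length final_word = n - 1"
  using length_ge by simp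

lemma final_word_extensions: "final_word @ [b] \<in> windows"
  using stuck[of b] ok_x n_pos length_ge by (auto simp: ok_def substrs_snoc)

definition inner_occurrence :: "bool list \<Rightarrow> nat \<Rightarrow> bool" where
  "inner_occurrence z q \<longleftrightarrow> 1 \<le> q \<and> q + (n - 1) \<le> length x \<and> take (n - 1) (drop q x) = z"

lemma preceded_window:
  assumes "inner_occurrence z q"
  shows "take n (drop (q - 1) x) = x ! (q - 1) # z" "q - 1 + n \<le> length x"
proof -
  have "q - 1 < length x" "1 \<le> q"
    using assms n_pos by (auto simp: inner_occurrence_def)
  then have "drop (q - 1) x = x ! (q - 1) # drop q x"
    by (metis Cons_nth_drop_Suc Suc_diff_1 less_le_trans zero_less_one)
  moreover have "n = Suc (n - 1)"
    using n_pos by simp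
  ultimately show "take n (drop (q - 1) x) = x ! (q - 1) # z"
    using assms by (metis inner_occurrence_def take_Suc_Cons)
  show "q - 1 + n \<le> length x"
    using assms n_pos by (auto simp: inner_occurrence_def)
qed

lemma preceded_window_mem: "inner_occurrence z q \<Longrightarrow> x ! (q - 1) # z \<in> windows"
  using preceded_window by (force simp: set_substrs)

lemma preceding_bit_inj:
  assumes "inner_occurrence z q" "inner_occurrence z q'" "x ! (q - 1) = x ! (q' - 1)"
  shows "q = q'"
proof -
  have "q - 1 = q' - 1"
    by (rule ok_window_inj[OF ok_x])
      (use preceded_window[OF assms(1)] preceded_window[OF assms(2)] assms(3) in auto)
  then show ?thesis
    using assms(1,2) unfolding inner_occurrence_def by linarith
qed

text \<open>Distinct inner occurrences have distinct preceding bits, and there are only two bits.\<close>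
lemma two_inner_occurrences:
  assumes "inner_occurrence z q" "inner_occurrence z q'" "q \<noteq> q'"
  shows "a # z \<in> windows"
proof -
  have "x ! (q - 1) \<noteq> x ! (q' - 1)"
    using preceding_bit_inj assms by blast
  then have "a = x ! (q - 1) \<or> a = x ! (q' - 1)"
    by blast
  then show ?thesis
    using preceded_window_mem[OF assms(1)] preceded_window_mem[OF assms(2)] by auto
qed

lemma no_three_inner_occurrences:
  assumes "inner_occurrence z q1" "inner_occurrence z q2" "inner_occurrence z q3"
    and "q1 \<noteq> q2" "q1 \<noteq> q3" "q2 \<noteq> q3"
  shows False
  using preceding_bit_inj[OF assms(1,2)] preceding_bit_inj[OF assms(1,3)]
    preceding_bit_inj[OF assms(2,3)] assms(4-6) by blast

lemma window_position:
  assumes "z @ [b] \<in> windows" "length z = n - 1"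
  obtains p where "p < length x - (n - 1)" "take (n - 1) (drop p x) = z"
    "take n (drop p x) = z @ [b]"
proof -
  obtain p where p: "p + n \<le> length x" "take n (drop p x) = z @ [b]"
    using assms(1) by (auto simp: set_substrs)
  have "take (n - 1) (drop p x) = take (n - 1) (take n (drop p x))"
    by (simp add: min_def)
  also have "\<dots> = z"
    using p(2) assms(2) by simp
  moreover have "p < length x - (n - 1)"
    using p(1) n_pos by linarith
  ultimately show ?thesis
    using that p(2) by blast
qed

lemma final_word_inner: "1 \<le> length x - (n - 1) \<Longrightarrow> inner_occurrence final_word (length x - (n - 1))"
  using length_ge by (simp add: inner_occurrence_def)

lemma start_occurrence: "take (n - 1) (drop 0 x) = z \<Longrightarrow> z = replicate (n - 1) True"
  using prefix_ones by simp

text \<open>Both extensions of the final word occur earlier; together with the final position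
  these would be three inner occurrences unless one of them is the start of x.\<close>
lemma final_word_ones: "final_word = replicate (n - 1) True"
proof (rule ccontr)
  assume ne: "final_word \<noteq> replicate (n - 1) True"
  obtain p0 where p0: "p0 < length x - (n - 1)" "take (n - 1) (drop p0 x) = final_word"
      "take n (drop p0 x) = final_word @ [False]"
    using window_position[OF final_word_extensions length_final_word] by blast
  obtain p1 where p1: "p1 < length x - (n - 1)" "take (n - 1) (drop p1 x) = final_word"
      "take n (drop p1 x) = final_word @ [True]"
    using window_position[OF final_word_extensions length_final_word] by blast
  have "p0 \<noteq> p1"
    using p0(3) p1(3) by auto
  moreover have "p0 \<noteq> 0" "p1 \<noteq> 0"
    using start_occurrence p0(2) p1(2) ne by metis+
  ultimately show False
    using no_three_inner_occurrences[of final_word p0 p1 "length x - (n - 1)"]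
      final_word_inner p0 p1 by (simp add: inner_occurrence_def, linarith)
qed

lemma both_extensions_imp_predecessors:
  assumes "length z = n - 1" "z @ [False] \<in> windows" "z @ [True] \<in> windows"
  shows "a # z \<in> windows"
proof -
  obtain p0 where p0: "p0 < length x - (n - 1)" "take (n - 1) (drop p0 x) = z"
      "take n (drop p0 x) = z @ [False]"
    using window_position[OF assms(2,1)] by blast
  obtain p1 where p1: "p1 < length x - (n - 1)" "take (n - 1) (drop p1 x) = z"
      "take n (drop p1 x) = z @ [True]"
    using window_position[OF assms(3,1)] by blast
  have "p0 \<noteq> p1"
    using p0(3) p1(3) by auto
  show ?thesis
  proof (cases "p0 = 0 \<or> p1 = 0")
    case False
    then show ?thesis
      using two_inner_occurrences[of z p0 p1] p0 p1 \<open>p0 \<noteq> p1\<close> by (simp add: inner_occurrence_def)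
  next
    case True
    then have "z = final_word"
      using start_occurrence p0(2) p1(2) final_word_ones by metis
    then show ?thesis
      using True two_inner_occurrences[of z p0 "length x - (n - 1)"]
        two_inner_occurrences[of z p1 "length x - (n - 1)"] final_word_inner p0 p1 \<open>p0 \<noteq> p1\<close>
      by (auto simp: inner_occurrence_def)
  qed
qed

text \<open>By the greedy invariant v @ [True] is missing, and it is a predecessor of tl v @ [True].\<close>
lemma missing_extension_shift:
  assumes "length v = n - 1" "v \<noteq> []" "\<not> (v @ [False] \<in> windows \<and> v @ [True] \<in> windows)"
  shows "\<not> (tl v @ [True] @ [False] \<in> windows \<and> tl v @ [True] @ [True] \<in> windows)"
proof
  assume both: "tl v @ [True] @ [False] \<in> windows \<and> tl v @ [True] @ [True] \<in> windows"
  have "length (tl v @ [True]) = n - 1"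
    using assms(1,2) by (cases v) auto
  then have "hd v # (tl v @ [True]) \<in> windows"
    using both_extensions_imp_predecessors both by simp
  then have "v @ [True] \<in> windows"
    using assms(2) by (metis append_Cons list.collapse)
  then show False
    using assms(3) inv by (auto simp: martin_inv_def)
qed

text \<open>Shifting n-1 times turns y into 1^(n-1), the final word, whose extensions both occur.\<close>
lemma extensions_occur:
  assumes "length y = n - 1"
  shows "y @ [b] \<in> windows"
proof -
  have "\<not> (y @ [False] \<in> windows \<and> y @ [True] \<in> windows) \<Longrightarrow> k \<le> n - 1 \<Longrightarrow>
    \<not> ((drop k y @ replicate k True) @ [False] \<in> windows \<and>
       (drop k y @ replicate k True) @ [True] \<in> windows)" for k
  proof (induction k)
    case (Suc k)
    let ?v = "drop k y @ replicate k True"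
    have "length ?v = n - 1" "?v \<noteq> []"
      using Suc.prems assms by auto
    moreover have "\<not> (?v @ [False] \<in> windows \<and> ?v @ [True] \<in> windows)"
      using Suc by simp
    ultimately have "\<not> ((tl ?v @ [True]) @ [False] \<in> windows \<and> (tl ?v @ [True]) @ [True] \<in> windows)"
      using missing_extension_shift by simp
    moreover have "tl ?v @ [True] = drop (Suc k) y @ replicate (Suc k) True"
      using Suc.prems assms by (simp add: drop_Suc tl_drop replicate_append_same)
    ultimately show ?case
      by simp
  qed simp
  from this[of "n - 1"] have "y @ [False] \<in> windows \<and> y @ [True] \<in> windows"
    using assms final_word_extensions final_word_ones by auto
  then show ?thesis
    by (cases b) auto
qed

lemma windows_eq: "windows = {w. length w = n}"
proof (intro equalityI subsetI)
  fix w :: "bool list"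
  assume "w \<in> {w. length w = n}"
  then have "w \<noteq> []"
    using n_pos by auto
  then have "w = butlast w @ [last w]" "length (butlast w) = n - 1"
    using \<open>w \<in> {w. length w = n}\<close> by auto
  then show "w \<in> windows"
    using extensions_occur by metis
qed (use substrs_subset in blast)

lemma length_eq: "length x = 2 ^ n + (n - 1)"
proof -
  have "Suc (length x) - n = card windows"
    using ok_x by (simp add: ok_def distinct_card length_substrs)
  then have "Suc (length x) - n = 2 ^ n"
    using windows_eq card_bool_lists by simp
  moreover have "0 < (2::nat) ^ n"
    by simp
  ultimately show ?thesis
    using n_pos by linarith
qed

end

section \<open>Cyclic windows of the de Bruijn string\<close>

definition cyclic_window :: "'a list \<Rightarrow> nat \<Rightarrow> nat \<Rightarrow> 'a list" where
  "cyclic_window c n p = map (\<lambda>r. c ! ((p + r) mod length c)) [0..<n]"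

lemma length_cyclic_window [simp]: "length (cyclic_window c n p) = n"
  by (simp add: cyclic_window_def)

lemma nth_wrap_suffix:
  assumes "k \<le> length c" "i < length c + k"
  shows "(drop (length c - k) c @ c) ! i = c ! ((i + (length c - k)) mod length c)"
proof (cases "i < k")
  case True
  then show ?thesis
    using assms by (simp add: nth_append add.commute)
next
  case False
  have shift: "i + (length c - k) = (i - k) + length c"
    using assms False by simp
  have "(i + (length c - k)) mod length c = i - k"
    unfolding shift using assms by simp
  then show ?thesis
    using assms False by (simp add: nth_append)
qed

lemma window_wrap_suffix:
  assumes "k \<le> length c" "q + n \<le> length c + k"
  shows "take n (drop q (drop (length c - k) c @ c)) = cyclic_window c n ((q + (length c - k)) mod length c)"
    (is "take n (drop q ?y) = _")
proof (rule nth_equalityI)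
  have "length ?y = length c + k"
    using assms by simp
  then show len: "length (take n (drop q ?y)) = length (cyclic_window c n ((q + (length c - k)) mod length c))"
    using assms by simp
  fix r
  assume "r < length (take n (drop q ?y))"
  then have "r < n"
    using len by simp
  then have "take n (drop q ?y) ! r = ?y ! (q + r)"
    using assms by (simp del: drop_append)
  also have "\<dots> = c ! ((q + r + (length c - k)) mod length c)"
    using \<open>r < n\<close> assms by (intro nth_wrap_suffix) simp_all
  also have "\<dots> = cyclic_window c n ((q + (length c - k)) mod length c) ! r"
    using \<open>r < n\<close> by (simp add: cyclic_window_def mod_add_right_eq ac_simps)
  finally show "take n (drop q ?y) ! r = cyclic_window c n ((q + (length c - k)) mod length c) ! r" .
qed

lemma length_db: "1 \<le> n \<Longrightarrow> length (db n) = 2 ^ n"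
proof -
  assume "1 \<le> n"
  then interpret martin_terminal n "martin n"
    using martin_stuck by unfold_locales auto
  show ?thesis
    using length_eq by (simp add: db_def)
qed

lemma martin_eq_wrapped_db:
  assumes "1 \<le> n"
  shows "martin n = drop (2 ^ n - (n - 1)) (db n) @ db n"
proof -
  interpret martin_terminal n "martin n"
    using martin_stuck assms by unfold_locales auto
  have "n - 1 \<le> 2 ^ n"
    using less_exp[of n] by linarith
  then have "drop (2 ^ n - (n - 1)) (db n) = final_word"
    using length_eq by (simp add: db_def)
  then show ?thesis
    using prefix_ones final_word_ones by (metis append_take_drop_id db_def)
qed

lemma db_cyclic_windows:
  assumes "1 \<le> n"
  shows "cyclic_window (db n) n ` {..<2 ^ n} = {w. length w = n}"
proof (intro equalityI subsetI)
  interpret martin_terminal n "martin n"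
    using martin_stuck assms by unfold_locales auto
  fix w :: "bool list"
  assume "w \<in> {w. length w = n}"
  then obtain q where q: "q + n \<le> length (martin n)" "w = take n (drop q (martin n))"
    using windows_eq by (auto simp: set_substrs)
  have "n - 1 \<le> length (db n)"
    using less_exp[of n] unfolding length_db[OF assms] by linarith
  moreover have "q + n \<le> length (db n) + (n - 1)"
    using q(1) length_eq by (simp add: length_db[OF assms])
  ultimately have "take n (drop q (drop (length (db n) - (n - 1)) (db n) @ db n)) =
      cyclic_window (db n) n ((q + (length (db n) - (n - 1))) mod length (db n))"
    by (rule window_wrap_suffix)
  then have "w = cyclic_window (db n) n ((q + (2 ^ n - (n - 1))) mod 2 ^ n)"
    unfolding q(2) length_db[OF assms] martin_eq_wrapped_db[OF assms, symmetric] .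
  then show "w \<in> cyclic_window (db n) n ` {..<2 ^ n}"
    by simp
qed auto

lemma db_cyclic_window_unique:
  assumes "1 \<le> n" "length w = n"
  shows "card {p. p < 2 ^ n \<and> cyclic_window (db n) n p = w} = 1"
proof -
  have inj: "inj_on (cyclic_window (db n) n) {..<2 ^ n}"
  proof (rule eq_card_imp_inj_on)
    show "card (cyclic_window (db n) n ` {..<2 ^ n}) = card {..<(2::nat) ^ n}"
      unfolding db_cyclic_windows[OF assms(1)] card_bool_lists by simp
  qed simp
  have "w \<in> cyclic_window (db n) n ` {..<2 ^ n}"
    unfolding db_cyclic_windows[OF assms(1)] using assms(2) by simp
  then obtain p where p: "p < 2 ^ n" "cyclic_window (db n) n p = w"
    by auto
  have "{p. p < 2 ^ n \<and> cyclic_window (db n) n p = w} = {p}"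
  proof (intro equalityI subsetI)
    fix p'
    assume "p' \<in> {p. p < 2 ^ n \<and> cyclic_window (db n) n p = w}"
    then have "p' < 2 ^ n" and eq: "cyclic_window (db n) n p' = cyclic_window (db n) n p"
      using p by simp_all
    then show "p' \<in> {p}"
      using inj_onD[OF inj eq] p(1) by simp
  qed (use p in simp)
  then show ?thesis
    by simp
qed

section \<open>Blocks of concatenated rotations\<close>

definition stacked_rotations :: "'a list \<Rightarrow> nat \<Rightarrow> nat \<Rightarrow> 'a list" where
  "stacked_rotations c a t = concat (map (\<lambda>i. concat (replicate t (rotate i c))) [0..<a])"

lemma nth_concat_uniform:
  assumes "\<And>i. i < m \<Longrightarrow> length (g i) = K" "k < m * K"
  shows "concat (map g [0..<m]) ! k = g (k div K) ! (k mod K)"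
  using assms
proof (induction m)
  case (Suc m)
  have "length (concat (map g [0..<m])) = (\<Sum>i\<leftarrow>[0..<m]. K)"
    unfolding length_concat map_map using Suc.prems(1)
    by (intro arg_cong[where f = sum_list] map_cong) auto
  then have len: "length (concat (map g [0..<m])) = m * K"
    by (simp add: sum_list_triv)
  show ?case
  proof (cases "k < m * K")
    case True
    then show ?thesis
      using Suc len by (simp add: nth_append)
  next
    case False
    then obtain i where "k = m * K + i" "i < K"
      using Suc.prems(2) by (metis add.commute le_add_diff_inverse mult_Suc not_less add_less_cancel_left)
    then show ?thesis
      using len by (simp add: nth_append)
  qed
qed simp

lemma length_stacked_rotations: "length (stacked_rotations c a t) = a * t * length c"
  by (simp add: stacked_rotations_def length_concat sum_list_triv sum_list_replicate o_def)

lemma nth_stacked_rotations: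
  assumes "k < a * t * length c"
  shows "stacked_rotations c a t ! k = c ! ((k div (t * length c) + k) mod length c)"
proof -
  let ?N = "length c"
  have "t * ?N \<noteq> 0"
    using assms by (cases "t = 0 \<or> ?N = 0") auto
  then have "0 < ?N" "k mod (t * ?N) < t * ?N"
    by simp_all
  have "stacked_rotations c a t ! k = concat (replicate t (rotate (k div (t * ?N)) c)) ! (k mod (t * ?N))"
    unfolding stacked_rotations_def using assms by (subst nth_concat_uniform) (auto simp: mult.assoc length_concat sum_list_replicate)
  also have "\<dots> = rotate (k div (t * ?N)) c ! (k mod (t * ?N) mod ?N)"
    using nth_concat_uniform[of t "\<lambda>_. rotate (k div (t * ?N)) c" ?N "k mod (t * ?N)"] \<open>k mod (t * ?N) < t * ?N\<close>
    by (simp add: map_replicate_const)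
  also have "\<dots> = c ! ((k div (t * ?N) + k) mod ?N)"
    using \<open>0 < ?N\<close> by (simp add: nth_rotate mod_mod_cancel mod_add_right_eq)
  finally show ?thesis .
qed

lemma occ_b_eq_card_blocks:
  assumes "length x = n * N" "length w = n" "0 < n"
  shows "occ_b w x = card {j. j < N \<and> take n (drop (j * n) x) = w}"
proof -
  have "{i. i + length w \<le> length x \<and> take (length w) (drop i x) = w \<and> i mod length w = 0}
      = (\<lambda>j. j * n) ` {j. j < N \<and> take n (drop (j * n) x) = w}"
  proof (intro equalityI subsetI)
    fix i
    assume "i \<in> {i. i + length w \<le> length x \<and> take (length w) (drop i x) = w \<and> i mod length w = 0}"
    then have i: "i + n \<le> n * N" "take n (drop i x) = w" "i mod n = 0"
      using assms by auto
    have i_eq: "i div n * n = i"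
      using i(3) by (metis add_0_right div_mult_mod_eq)
    then have "Suc (i div n) * n \<le> N * n"
      using i(1) by (simp add: mult.commute)
    then have "Suc (i div n) \<le> N"
      using assms(3) by (subst (asm) mult_le_cancel2) simp
    then have "i div n < N"
      by simp
    then show "i \<in> (\<lambda>j. j * n) ` {j. j < N \<and> take n (drop (j * n) x) = w}"
      using i(2) i_eq by (intro image_eqI[where x = "i div n"]) simp_all
  next
    fix i
    assume "i \<in> (\<lambda>j. j * n) ` {j. j < N \<and> take n (drop (j * n) x) = w}"
    then obtain j where j: "j < N" "take n (drop (j * n) x) = w" "i = j * n"
      by blast
    then have "Suc j * n \<le> N * n"
      by (intro mult_le_mono1) simp
    then show "i \<in> {i. i + length w \<le> length x \<and> take (length w) (drop i x) = w \<and> i mod length w = 0}"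
      using assms j by (simp add: mult.commute)
  qed
  moreover have "inj (\<lambda>j. j * n)"
    using assms(3) by (simp add: inj_on_def)
  ultimately show ?thesis
    unfolding occ_b_def by (simp add: card_image inj_on_subset)
qed

lemma block_stacked_rotations:
  assumes "length c = a * M" "n = a * t" "j < length c"
  shows "take n (drop (j * n) (stacked_rotations c a t)) = cyclic_window c n ((j div M + j * n) mod length c)"
    (is "take n (drop (j * n) ?T) = _")
proof (rule nth_equalityI)
  have len: "length ?T = n * length c"
    using assms(2) by (simp add: length_stacked_rotations)
  have "Suc j * n \<le> length c * n"
    using assms(3) by (intro mult_le_mono1) simp
  then have block: "j * n + n \<le> length ?T"
    unfolding len by (simp add: mult.commute)
  then show "length (take n (drop (j * n) ?T)) = length (cyclic_window c n ((j div M + j * n) mod length c))"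
    by simp
  fix r
  assume "r < length (take n (drop (j * n) ?T))"
  then have r: "r < n"
    by simp
  have "t * length c = n * M"
    using assms(1,2) by simp
  moreover have "(j * n + r) div n = j"
    using r by simp
  ultimately have "(j * n + r) div (t * length c) = j div M"
    by (metis div_mult2_eq)
  moreover have "j * n + r < a * t * length c"
    using block r assms(2) len by simp
  ultimately have "?T ! (j * n + r) = c ! ((j div M + (j * n + r)) mod length c)"
    by (simp add: nth_stacked_rotations)
  moreover have "take n (drop (j * n) ?T) ! r = ?T ! (j * n + r)"
    using block r by simp
  ultimately show "take n (drop (j * n) ?T) ! r = cyclic_window c n ((j div M + j * n) mod length c) ! r"
    using r by (simp add: cyclic_window_def mod_add_left_eq add.assoc)
qed

text \<open>The rotation index j div M < a is the residue modulo a, since a divides both a M and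
  j a t; what is left is j t modulo M, and t is a unit modulo M.\<close>
lemma inj_on_block_start:
  fixes a t M :: nat
  assumes "coprime t M"
  shows "inj_on (\<lambda>j. (j div M + j * (a * t)) mod (a * M)) {..<a * M}"
proof
  fix j j'
  assume j: "j \<in> {..<a * M}" and j': "j' \<in> {..<a * M}"
    and eq: "(j div M + j * (a * t)) mod (a * M) = (j' div M + j' * (a * t)) mod (a * M)"
  have rot: "(i div M + i * (a * t)) mod (a * M) mod a = i div M" if "i < a * M" for i
  proof -
    have "(i div M + i * (a * t)) mod (a * M) mod a = (i div M + (i * t) * a) mod a"
      by (simp add: mod_mod_cancel ac_simps)
    also have "\<dots> = i div M"
      using less_mult_imp_div_less[OF that] by simp
    finally show ?thesis .
  qed
  have "j div M = (j div M + j * (a * t)) mod (a * M) mod a"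
    using rot j by simp
  also have "\<dots> = j' div M"
    unfolding eq using rot j' by simp
  finally have same_rotation: "j div M = j' div M" .
  with eq have "[j div M + j * (a * t) = j div M + j' * (a * t)] (mod a * M)"
    by (simp add: cong_def)
  then have "[j * (a * t) = j' * (a * t)] (mod a * M)"
    by (rule cong_add_lcancel_nat[THEN iffD1])
  moreover have "i * (a * t) mod (a * M) = a * (i * t mod M)" for i
    using mult_mod_right[of a "i * t" M] by (simp add: ac_simps)
  ultimately have "a * (j * t mod M) = a * (j' * t mod M)"
    by (simp add: cong_def)
  moreover have "0 < a"
    using j by (auto intro: gr0I)
  ultimately have "[j * t = j' * t] (mod M)"
    by (simp add: cong_def)
  then have "[j = j'] (mod M)"
    using cong_mult_rcancel_nat[OF assms] by blast
  then show "j = j'"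
    using same_rotation by (metis cong_def div_mult_mod_eq)
qed

lemma card_filter_permutation:
  fixes \<sigma> :: "nat \<Rightarrow> nat"
  assumes "inj_on \<sigma> {..<N}" "\<sigma> ` {..<N} \<subseteq> {..<N}"
  shows "card {j. j < N \<and> P (\<sigma> j)} = card {p. p < N \<and> P p}"
proof -
  have surj: "\<sigma> ` {..<N} = {..<N}"
    using endo_inj_surj assms by blast
  have "{p. p < N \<and> P p} = \<sigma> ` {j. j < N \<and> P (\<sigma> j)}"
  proof (intro equalityI subsetI)
    fix p
    assume p: "p \<in> {p. p < N \<and> P p}"
    then have "p \<in> \<sigma> ` {..<N}"
      unfolding surj by simp
    then obtain j where "j < N" "p = \<sigma> j"
      by auto
    then show "p \<in> \<sigma> ` {j. j < N \<and> P (\<sigma> j)}"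
      using p by auto
  next
    fix p
    assume "p \<in> \<sigma> ` {j. j < N \<and> P (\<sigma> j)}"
    then show "p \<in> {p. p < N \<and> P p}"
      using assms(2) by auto
  qed
  moreover have "inj_on \<sigma> {j. j < N \<and> P (\<sigma> j)}"
    using assms(1) by (rule inj_on_subset) auto
  ultimately show ?thesis
    by (simp add: card_image)
qed

theorem occ_b_stacked_rotations:
  assumes "length c = a * M" "n = a * t" "coprime t M" "length w = n" "0 < n"
  shows "occ_b w (stacked_rotations c a t) = card {p. p < length c \<and> cyclic_window c n p = w}"
proof -
  let ?\<sigma> = "\<lambda>j. (j div M + j * n) mod length c"
  have "occ_b w (stacked_rotations c a t) = card {j. j < length c \<and> take n (drop (j * n) (stacked_rotations c a t)) = w}"
    using assms by (simp add: occ_b_eq_card_blocks length_stacked_rotations)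
  also have "\<dots> = card {j. j < length c \<and> cyclic_window c n (?\<sigma> j) = w}"
    by (intro arg_cong[where f = card] Collect_cong) (use block_stacked_rotations[OF assms(1,2)] in auto)
  also have "\<dots> = card {p. p < length c \<and> cyclic_window c n p = w}"
  proof (rule card_filter_permutation)
    show "inj_on ?\<sigma> {..<length c}"
      using inj_on_block_start[OF assms(3), of a] assms(1,2) by simp
    show "?\<sigma> ` {..<length c} \<subseteq> {..<length c}"
      by (auto intro!: mod_less_divisor)
  qed
  finally show ?thesis .
qed

lemma db_rot_eq_rotate: "i < length (db n) \<Longrightarrow> db_rot n i = rotate i (db n)"
  by (simp add: db_rot_def rotate_drop_take)

lemma two_power_multiplicity_le: "1 \<le> n \<Longrightarrow> 2 ^ multiplicity 2 n \<le> (n::nat)"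
  by (intro dvd_imp_le multiplicity_dvd) simp

lemma S_eq_stacked_rotations:
  assumes "1 \<le> n"
  shows "S n = stacked_rotations (db n) (2 ^ multiplicity 2 n) (n div 2 ^ multiplicity 2 n)"
proof -
  have "db_rot n i = rotate i (db n)" if "i < 2 ^ multiplicity 2 n" for i
    using that two_power_multiplicity_le[OF assms] less_exp[of n] length_db[OF assms]
    by (intro db_rot_eq_rotate) linarith
  then show ?thesis
    unfolding S_def stacked_rotations_def Let_def
    by (intro arg_cong[where f = concat] map_cong) auto
qed

theorem lemma1:
  fixes n :: nat and w :: "bool list"
  assumes "n \<ge> 1" and "length w = n"
  shows "occ_b w (S n) = 1"
proof -
  define s where "s = multiplicity (2::nat) n"
  define t where "t = n div 2 ^ s"
  have n_eq: "n = 2 ^ s * t"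
    unfolding t_def s_def by (simp add: multiplicity_dvd)
  have "odd t"
    unfolding t_def s_def using assms(1) by (intro multiplicity_decompose) auto
  have "(2::nat) ^ s < 2 ^ n"
    using two_power_multiplicity_le[OF assms(1)] less_exp[of n] unfolding s_def by linarith
  then have "s < n"
    by simp
  then have len: "length (db n) = 2 ^ s * 2 ^ (n - s)"
    using length_db[OF assms(1)] by (simp flip: power_add)
  have "occ_b w (S n) = card {p. p < length (db n) \<and> cyclic_window (db n) n p = w}"
    unfolding S_eq_stacked_rotations[OF assms(1)] s_def[symmetric] t_def[symmetric]
    using occ_b_stacked_rotations[OF len n_eq _ assms(2)] \<open>odd t\<close> assms(1) by simp
  also have "\<dots> = 1"
    using db_cyclic_window_unique[OF assms] length_db[OF assms(1)] by simp
  finally show ?thesis .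
qed

end
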